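(* Let $X=\{x_j:j\in J\}\subset\mathbb{R}^2$ be finite with $n=|J|$. If $s\in\mathrm{conv}(\mathcal{M})$ and $s$ is equidistant from all points of $X$, then there exist weights $\tau_j\geq\frac{1}{n+1}$ ($j\in J$) with $\sum_j\tau_j=1$ and $s=\sum_j\tau_jx_j$.
   Context: $\mathcal{M}=\{M_j:j\in J\}$ with $M_j=\frac{1}{n+1}\big(x_j+\sum_{i\in J}x_i\big)$. *)

theory Defs
  imports "HOL-Analysis.Analysis"
begin

definition Mpt :: "'j set \<Rightarrow> ('j \<Rightarrow> real^2) \<Rightarrow> 'j \<Rightarrow> real^2" where
  "Mpt J x j = (1 / (real (card J) + 1)) *\<^sub>R (x j + (\<Sum>i\<in>J. x i))"

end

theory Submission
  imports Defs
begin

text \<open>Writing \<open>s = \<Sum>\<^sub>j c\<^sub>j M\<^sub>j\<close> with \<open>c\<^sub>j \<ge> 0\<close> and \<open>\<Sum>\<^sub>j c\<^sub>j = 1\<close>, the common summand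
  \<open>\<Sum>\<^sub>i x\<^sub>i\<close> of the \<open>M\<^sub>j\<close> contributes \<open>1/(n+1)\<close> to every weight, so
  \<open>s = \<Sum>\<^sub>j ((c\<^sub>j + 1)/(n+1)) x\<^sub>j\<close>.\<close>

lemma convex_hull_image_finite:
  assumes "finite J"
  shows "convex hull (f ` J) =
    {\<Sum>j\<in>J. c j *\<^sub>R f j | c. (\<forall>j\<in>J. 0 \<le> c j) \<and> sum c J = 1}"
proof -
  have "convex hull (\<Union>j\<in>J. {f j}) =
    {\<Sum>j\<in>J. c j *\<^sub>R t j | c t. (\<forall>j\<in>J. 0 \<le> c j) \<and> sum c J = 1 \<and> (\<forall>j\<in>J. t j \<in> {f j})}"
    by (rule convex_hull_finite_union) (use assms in auto)
  moreover have "(\<Union>j\<in>J. {f j}) = f ` J" by auto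
  ultimately show ?thesis
    by auto
qed

lemma sum_scaleR_shifted_means:
  fixes x :: "'j \<Rightarrow> 'a::real_vector"
  assumes "sum c J = 1"
  defines "N \<equiv> real (card J) + 1"
  shows "(\<Sum>j\<in>J. c j *\<^sub>R ((1 / N) *\<^sub>R (x j + (\<Sum>i\<in>J. x i))))
       = (\<Sum>j\<in>J. ((c j + 1) / N) *\<^sub>R x j)"
proof -
  have "(\<Sum>j\<in>J. c j *\<^sub>R ((1 / N) *\<^sub>R (x j + (\<Sum>i\<in>J. x i))))
      = (\<Sum>j\<in>J. (c j / N) *\<^sub>R x j) + (sum c J / N) *\<^sub>R (\<Sum>i\<in>J. x i)"
    by (simp add: scaleR_add_right sum.distrib scaleR_sum_left[symmetric] sum_divide_distrib)
  also have "\<dots> = (\<Sum>j\<in>J. (c j / N) *\<^sub>R x j) + (\<Sum>j\<in>J. (1 / N) *\<^sub>R x j)"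
    using assms(1) by (simp add: scaleR_sum_right)
  finally show ?thesis
    by (simp add: sum.distrib[symmetric] scaleR_add_left[symmetric] add_divide_distrib)
qed

theorem lemma8:
  fixes J :: "'j set" and x :: "'j \<Rightarrow> real^2" and s :: "real^2"
  assumes "finite J"
    and "inj_on x J"
    and "s \<in> convex hull (Mpt J x ` J)"
    and "\<exists>r. \<forall>j\<in>J. dist s (x j) = r"
  shows "\<exists>\<tau> :: 'j \<Rightarrow> real. (\<forall>j\<in>J. \<tau> j \<ge> 1 / (real (card J) + 1))
           \<and> (\<Sum>j\<in>J. \<tau> j) = 1 \<and> s = (\<Sum>j\<in>J. \<tau> j *\<^sub>R x j)"
proof -
  define N where "N = real (card J) + 1"
  obtain c where c_nonneg: "\<forall>j\<in>J. 0 \<le> c j" and c_sum: "sum c J = 1"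
    and s: "s = (\<Sum>j\<in>J. c j *\<^sub>R Mpt J x j)"
    using assms(3) by (auto simp: convex_hull_image_finite[OF assms(1)])
  have "s = (\<Sum>j\<in>J. ((c j + 1) / N) *\<^sub>R x j)"
    using sum_scaleR_shifted_means[OF c_sum, of x] by (simp add: s Mpt_def N_def)
  moreover have "(\<Sum>j\<in>J. (c j + 1) / N) = 1"
    using c_sum by (simp add: sum_divide_distrib[symmetric] sum.distrib N_def)
  moreover have "\<forall>j\<in>J. 1 / N \<le> (c j + 1) / N"
    using c_nonneg by (simp add: N_def divide_right_mono)
  ultimately show ?thesis
    unfolding N_def by (intro exI[of _ "\<lambda>j. (c j + 1) / (real (card J) + 1)"]) simp
qed

end
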